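(* Let $\Pi=(\mathsf A,\mathsf B)$ be a protocol. Then for every $c\in(0,\frac12]$ there exists $z=z(c,\Pi)\in\mathbb N$ such that either (1) $\mathbb E_{L_\Pi}[C^{\mathsf A,z}_\Pi]\ge c(1-2c)$ and $\sum_{j=0}^{z-1}\beta_j<c$; or (2) $\mathbb E_{L_\Pi}[C^{\mathsf B,z}_\Pi]\ge c(1-2c)$ and $\sum_{j=0}^{z}\alpha_j<c$, where $\alpha_j=1-\mathrm{Best}_{\mathsf B}(\Pi_{(\mathsf A,j)})$ and $\beta_j=1-\mathrm{Best}_{\mathsf A}(\Pi_{(\mathsf B,j)})$.
   Context: Protocols are $m$-round single-bit-message protocols identified with the complete binary tree of height $m$, with control scheme, edge probabilities $e_\Pi(u,ub)$, output $\chi_\Pi:\text{leaves}\to\{0,1\}$, visit probabilities $v_\Pi(u)$, leaf distribution $L_\Pi$; $\Pi_u$ is the subprotocol under $u$ (or $\perp$ if $v_\Pi(u)=0$); expectations over $L_\perp$ are $0$; $\mathbb E_{L_{\Pi_u}}[M]$ is the expectation of $M$ restricted to leaves under $u$. $\mathsf A$-dominated measure $M^{\mathsf A}_\Pi$: for a 0-round protocol with leaf $\ell$, $M^{\mathsf A}_\Pi(\ell)=\chi_\Pi(\ell)$; otherwise for a leaf with first bit $b$, with $\mu_c=\mathbb E_{L_{\Pi_c}}[M^{\mathsf A}_{\Pi_c}]$: value $0$ if $e_\Pi(\lambda,b)=0$; $M^{\mathsf A}_{\Pi_b}(\ell)$ if $e_\Pi(\lambda,b)=1$, or if $e_\Pi(\lambda,b)\in(0,1)$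 and ($\mathsf A$ controls the root or $\mu_b\le\mu_{1-b}$); $\frac{\mu_{1-b}}{\mu_b}M^{\mathsf A}_{\Pi_b}(\ell)$ otherwise. $M^{\mathsf B}_\Pi$ is defined identically with $\mathsf A,\mathsf B$ exchanged and base case $1-\chi_\Pi(\ell)$; $M^{\mathsf A}_\perp,M^{\mathsf B}_\perp$ are zero. Conditional protocol: for $\mathbb E_{L_\Pi}[M]<1$, $\Pi|_M$ keeps control and output and has $e_{\Pi|_M}(u,ub)=0$ if $\mathbb E_{L_{\Pi_u}}[M]=1$, else $e_\Pi(u,ub)\frac{1-\mathbb E_{L_{\Pi_{ub}}}[M]}{1-\mathbb E_{L_{\Pi_u}}[M]}$; $\Pi|_M=\perp$ if $\mathbb E_{L_\Pi}[M]=1$ or $\Pi=\perp$. Sequence: $\Pi_{(\mathsf A,0)}=\Pi$, $\Pi_{(\mathsf B,j)}=\Pi_{(\mathsf A,j)}|_{M^{\mathsf A}_{\Pi_{(\mathsf A,j)}}}$, $\Pi_{(\mathsf A,j+1)}=\Pi_{(\mathsf B,j)}|_{M^{\mathsf B}_{\Pi_{(\mathsf B,j)}}}$. $C^{\mathsf A,z}_\Pi=\sum_{j=0}^z M^{\mathsf A}_{\Pi_{(\mathsf A,j)}}\prod_{t<j}(1-M^{\mathsf A}_{\Pi_{(\mathsf A,t)}})$ and $C^{\mathsf B,z}_\Pi=\sum_{j=0}^z M^{\mathsf B}_{\Pi_{(\mathsf B,j)}}\prod_{t<j}(1-M^{\mathsf B}_{\Pi_{(\mathsf B,t)}})$. $\mathrm{Best}_{\mathsf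 A}(\Pi')$ ($\mathrm{Best}_{\mathsf B}(\Pi')$) is the maximal probability of output $1$ (resp. $0$) achievable by a deterministic attacker for $\mathsf A$ (resp. $\mathsf B$) that only sends messages with positive probability in $\Pi'$, against the honest other party; $\mathrm{Best}_{\mathsf A}(\perp)=\mathrm{Best}_{\mathsf B}(\perp)=1$. *)

theory Defs
  imports Complex_Main
begin

text \<open>
An m-round single-bit-message protocol, identified with the complete binary tree of
height m.  Nodes are bit lists (True = bit 1) of length at most m; leaves are the
bit lists of length exactly m.
  ctrlA u  : party A controls node u (otherwise B does);
  edge u b : the edge probability e(u, ub);
  outp l   : the output chi(l) of leaf l (True = 1).
The empty protocol (bottom) is represented by None in the type proto option.
\<close>

record proto =
  rounds :: nat
  ctrlA  :: "bool list \<Rightarrow> bool"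
  edge   :: "bool list \<Rightarrow> bool \<Rightarrow> real"
  outp   :: "bool list \<Rightarrow> bool"

definition is_protocol :: "proto \<Rightarrow> bool" where
  "is_protocol P \<longleftrightarrow> (\<forall>u b. length u < rounds P \<longrightarrow>
      0 \<le> edge P u b \<and> edge P u True + edge P u False = 1)"

definition leaves :: "proto \<Rightarrow> bool list set" where
  "leaves P = {l. length l = rounds P}"

definition vprob :: "proto \<Rightarrow> bool list \<Rightarrow> real" where
  "vprob P u = (\<Prod>i<length u. edge P (take i u) (u ! i))"

definition expect :: "proto option \<Rightarrow> (bool list \<Rightarrow> real) \<Rightarrow> real" where
  "expect Q M = (case Q of None \<Rightarrow> 0
      | Some P \<Rightarrow> (\<Sum>l\<in>leaves P. vprob P l * M l))"

definition sub :: "proto \<Rightarrow> bool list \<Rightarrow> proto option" where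
  "sub P u = (if vprob P u = 0 then None else
     Some \<lparr> rounds = rounds P - length u,
            ctrlA = (\<lambda>v. ctrlA P (u @ v)),
            edge = (\<lambda>v. edge P (u @ v)),
            outp = (\<lambda>v. outp P (u @ v)) \<rparr>)"

definition subo :: "proto option \<Rightarrow> bool list \<Rightarrow> proto option" where
  "subo Q u = (case Q of None \<Rightarrow> None | Some P \<Rightarrow> sub P u)"

definition subE :: "proto option \<Rightarrow> bool list \<Rightarrow> (bool list \<Rightarrow> real) \<Rightarrow> real" where
  "subE Q u M = expect (subo Q u) (\<lambda>l. M (u @ l))"

text \<open>Dominated measures.  The boolean isA selects M^A (True) or M^B (False);
the nat argument is fuel equal to the number of rounds.\<close>
primrec domf :: "bool \<Rightarrow> nat \<Rightarrow> proto option \<Rightarrow> bool list \<Rightarrow> real" where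
  "domf isA 0 Q l = (case Q of None \<Rightarrow> 0
      | Some P \<Rightarrow> (if outp P l = isA then 1 else 0))"
| "domf isA (Suc n) Q l = (case Q of None \<Rightarrow> 0
      | Some P \<Rightarrow>
        (let b = hd l;
             mu = (\<lambda>c. expect (sub P [c]) (domf isA n (sub P [c])));
             e = edge P [] b;
             Mb = domf isA n (sub P [b]) (tl l)
         in if e = 0 then 0
            else if e = 1 then Mb
            else if 0 < e \<and> e < 1 \<and> (ctrlA P [] = isA \<or> mu b \<le> mu (\<not> b)) then Mb
            else mu (\<not> b) / mu b * Mb))"

definition dom_measure :: "bool \<Rightarrow> proto option \<Rightarrow> bool list \<Rightarrow> real" where
  "dom_measure isA Q = domf isA (case Q of None \<Rightarrow> 0 | Some P \<Rightarrow> rounds P) Q"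

abbreviation "MA \<equiv> dom_measure True"
abbreviation "MB \<equiv> dom_measure False"

definition cond :: "proto option \<Rightarrow> (bool list \<Rightarrow> real) \<Rightarrow> proto option" where
  "cond Q M = (case Q of None \<Rightarrow> None
     | Some P \<Rightarrow> (if expect Q M = 1 then None else
         Some (P\<lparr> edge := (\<lambda>u b. if subE Q u M = 1 then 0
                  else edge P u b * (1 - subE Q (u @ [b]) M) / (1 - subE Q u M)) \<rparr>)))"

primrec pseq :: "proto option \<Rightarrow> nat \<Rightarrow> proto option \<times> proto option" where
  "pseq Q 0 = (Q, cond Q (MA Q))"
| "pseq Q (Suc j) = (let a = cond (snd (pseq Q j)) (MB (snd (pseq Q j)))
                     in (a, cond a (MA a)))"

definition PiA :: "proto option \<Rightarrow> nat \<Rightarrow> proto option" where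
  "PiA Q j = fst (pseq Q j)"
definition PiB :: "proto option \<Rightarrow> nat \<Rightarrow> proto option" where
  "PiB Q j = snd (pseq Q j)"

definition CA :: "proto option \<Rightarrow> nat \<Rightarrow> bool list \<Rightarrow> real" where
  "CA Q z l = (\<Sum>j\<le>z. MA (PiA Q j) l * (\<Prod>t<j. 1 - MA (PiA Q t) l))"
definition CB :: "proto option \<Rightarrow> nat \<Rightarrow> bool list \<Rightarrow> real" where
  "CB Q z l = (\<Sum>j\<le>z. MB (PiB Q j) l * (\<Prod>t<j. 1 - MB (PiB Q t) l))"

text \<open>A deterministic attacker for party A (isA = True) or B
(isA = False) is a map sigma from nodes (= transcripts so far) to the bit it sends.\<close>
definition aedge :: "proto \<Rightarrow> bool \<Rightarrow> (bool list \<Rightarrow> bool) \<Rightarrow> bool list \<Rightarrow> bool \<Rightarrow> real" where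
  "aedge P isA \<sigma> u b = (if ctrlA P u = isA then (if \<sigma> u = b then 1 else 0) else edge P u b)"

definition avis :: "proto \<Rightarrow> bool \<Rightarrow> (bool list \<Rightarrow> bool) \<Rightarrow> bool list \<Rightarrow> real" where
  "avis P isA \<sigma> u = (\<Prod>i<length u. aedge P isA \<sigma> (take i u) (u ! i))"

definition valid_attacker :: "proto \<Rightarrow> bool \<Rightarrow> (bool list \<Rightarrow> bool) \<Rightarrow> bool" where
  "valid_attacker P isA \<sigma> \<longleftrightarrow> (\<forall>u. length u < rounds P \<longrightarrow> ctrlA P u = isA \<longrightarrow>
       avis P isA \<sigma> u > 0 \<longrightarrow> edge P u (\<sigma> u) > 0)"

text \<open>probability that the attacked execution outputs isA (1 for A, 0 for B)\<close>
definition attack_value :: "proto \<Rightarrow> bool \<Rightarrow> (bool list \<Rightarrow> bool) \<Rightarrow> real" where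
  "attack_value P isA \<sigma> = (\<Sum>l\<in>leaves P. avis P isA \<sigma> l * (if outp P l = isA then 1 else 0))"

definition Best :: "bool \<Rightarrow> proto option \<Rightarrow> real" where
  "Best isA Q = (case Q of None \<Rightarrow> 1
     | Some P \<Rightarrow> (SUP \<sigma>\<in>{\<sigma>. valid_attacker P isA \<sigma>}. attack_value P isA \<sigma>))"

abbreviation "BestA \<equiv> Best True"
abbreviation "BestB \<equiv> Best False"

end

theory Submission
  imports Defs
begin

text \<open>
  Write a(j) and b(j) for the expectations of M^A over Pi_(A,j) and of M^B over Pi_(B,j).
  A greedy attacker for B, always moving to the child in which M^A has the smaller mean, makes
  the output 0 with probability at least 1 - E[M^A]; hence alpha(j) <= a(j), and likewise
  beta(j) <= b(j). Conditioning on M rescales expectations by 1 - E[M], so expectations over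
  Pi_(A,j) are expectations over Pi reweighted by the product over t < j of (1 - M^A)(1 - M^B).
  This gives E[C^(A,z)] >= sum_(j<=z) s(j) a(j) and E[C^(B,z)] >= sum_(j<=z) s(j) (1 - a(j)) b(j),
  where s(j) = prod_(t<j) (1 - a(t)) (1 - b(t)) >= 1 - sum_(t<j) (a(t) + b(t)). Each round of
  conditioning removes a reachable leaf, so some a(j) or b(j) eventually equals 1. Taking z to be
  the first index at which the partial sums of a or of b reach c, every s(j) with j <= z is at
  least 1 - 2c, and the two alternatives follow.
\<close>

section \<open>Expectations over binary trees\<close>

definition path_weight :: "(bool list \<Rightarrow> bool \<Rightarrow> real) \<Rightarrow> bool list \<Rightarrow> bool list \<Rightarrow> real" where
  "path_weight g u l = (\<Prod>i<length l. g (u @ take i l) (l ! i))"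

lemma path_weight_Nil [simp]: "path_weight g u [] = 1"
  by (simp add: path_weight_def)

lemma path_weight_Cons: "path_weight g u (c # l) = g u c * path_weight g (u @ [c]) l"
  unfolding path_weight_def by (subst length_Cons, subst prod.lessThan_Suc_shift) simp

lemma path_weight_append:
  "path_weight g u (v @ w) = path_weight g u v * path_weight g (u @ v) w"
  by (induction v arbitrary: u) (simp_all add: path_weight_Cons)

lemma path_weight_shift: "path_weight (\<lambda>v. g (w @ v)) u l = path_weight g (w @ u) l"
  by (simp add: path_weight_def)

lemma path_weight_nonneg:
  assumes "\<And>v b. length v < length l \<Longrightarrow> 0 \<le> g (u @ v) b"
  shows "0 \<le> path_weight g u l"
  unfolding path_weight_def by (rule prod_nonneg) (use assms in auto)

lemma vprob_eq_path_weight: "vprob P u = path_weight (edge P) [] u"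
  by (simp add: vprob_def path_weight_def)

lemma avis_eq_path_weight: "avis P isA \<sigma> u = path_weight (aedge P isA \<sigma>) [] u"
  by (simp add: avis_def path_weight_def)

lemma finite_lists_length: "finite {l :: bool list. length l = n}"
  using finite_lists_length_eq[of "UNIV :: bool set" n] by simp

lemma lists_length_Suc_eq:
  "{l :: bool list. length l = Suc n} = Cons True ` {l. length l = n} \<union> Cons False ` {l. length l = n}"
proof (rule set_eqI)
  fix l :: "bool list"
  show "l \<in> {l. length l = Suc n} \<longleftrightarrow> l \<in> Cons True ` {l. length l = n} \<union> Cons False ` {l. length l = n}"
    by (cases l) auto
qed

lemma sum_lists_length_Suc:
  "(\<Sum>l\<in>{l :: bool list. length l = Suc n}. f l) =
   (\<Sum>l\<in>{l. length l = n}. f (True # l)) + (\<Sum>l\<in>{l. length l = n}. f (False # l))"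
  unfolding lists_length_Suc_eq
  by (subst sum.union_disjoint) (auto simp: finite_lists_length sum.reindex)

definition tree_sum ::
  "(bool list \<Rightarrow> bool \<Rightarrow> real) \<Rightarrow> nat \<Rightarrow> bool list \<Rightarrow> (bool list \<Rightarrow> real) \<Rightarrow> real" where
  "tree_sum g n u f = (\<Sum>l\<in>{l. length l = n}. path_weight g u l * f l)"

lemma tree_sum_0 [simp]: "tree_sum g 0 u f = f []"
  by (simp add: tree_sum_def)

lemma tree_sum_Suc: "tree_sum g (Suc n) u f =
   g u True * tree_sum g n (u @ [True]) (\<lambda>l. f (True # l)) +
   g u False * tree_sum g n (u @ [False]) (\<lambda>l. f (False # l))"
  unfolding tree_sum_def sum_lists_length_Suc
  by (simp add: path_weight_Cons sum_distrib_left mult.assoc)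

lemma tree_sum_shift: "tree_sum (\<lambda>v. g (w @ v)) n u f = tree_sum g n (w @ u) f"
  by (simp only: tree_sum_def path_weight_shift)

lemma tree_sum_cong_weights:
  "(\<And>v b. length v < n \<Longrightarrow> g (u @ v) b = g' (u @ v) b) \<Longrightarrow> tree_sum g n u f = tree_sum g' n u f"
  unfolding tree_sum_def path_weight_def by (rule sum.cong) (auto intro!: prod.cong)

lemma tree_sum_mult: "tree_sum g n u (\<lambda>l. k * f l) = k * tree_sum g n u f"
  unfolding tree_sum_def by (simp add: sum_distrib_left ac_simps)

lemma tree_sum_sum: "tree_sum g n u (\<lambda>l. \<Sum>j\<in>J. f j l) = (\<Sum>j\<in>J. tree_sum g n u (f j))"
  unfolding tree_sum_def by (simp add: sum_distrib_left sum.swap[of _ J])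

lemma tree_sum_mono:
  assumes "\<And>v b. length v < n \<Longrightarrow> 0 \<le> g (u @ v) b"
    and "\<And>l. length l = n \<Longrightarrow> f l \<le> h l"
  shows "tree_sum g n u f \<le> tree_sum g n u h"
  unfolding tree_sum_def
  by (rule sum_mono) (use assms in \<open>auto intro!: mult_left_mono path_weight_nonneg\<close>)

lemma tree_sum_subprob:
  assumes "\<And>v b. length v < n \<Longrightarrow> 0 \<le> g (u @ v) b"
    and "\<And>v. length v < n \<Longrightarrow> g (u @ v) True + g (u @ v) False \<le> 1"
  shows "tree_sum g n u (\<lambda>_. 1) \<le> 1"
  using assms
proof (induction n arbitrary: u)
  case 0
  then show ?case by simp
next
  case (Suc n)
  have "tree_sum g n (u @ [c]) (\<lambda>_. 1) \<le> 1" for c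
    by (rule Suc.IH) (use Suc.prems(1)[of "c # _"] Suc.prems(2)[of "c # _"] in auto)
  moreover have "0 \<le> g u c" for c
    using Suc.prems(1)[of "[]"] by simp
  ultimately have "g u c * tree_sum g n (u @ [c]) (\<lambda>_. 1) \<le> g u c" for c
    by (simp add: mult_left_le)
  moreover have "g u True + g u False \<le> 1"
    using Suc.prems(2)[of "[]"] by simp
  ultimately show ?case
    unfolding tree_sum_Suc by (smt (verit))
qed

definition subtree :: "proto \<Rightarrow> bool list \<Rightarrow> proto" where
  "subtree P u = \<lparr>rounds = rounds P - length u,
                  ctrlA = (\<lambda>v. ctrlA P (u @ v)),
                  edge = (\<lambda>v. edge P (u @ v)),
                  outp = (\<lambda>v. outp P (u @ v))\<rparr>"

lemma subtree_simps [simp]: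
  "rounds (subtree P u) = rounds P - length u"
  "ctrlA (subtree P u) = (\<lambda>v. ctrlA P (u @ v))"
  "edge (subtree P u) = (\<lambda>v. edge P (u @ v))"
  "outp (subtree P u) = (\<lambda>v. outp P (u @ v))"
  by (simp_all add: subtree_def)

lemma sub_eq_subtree: "sub P u = (if vprob P u = 0 then None else Some (subtree P u))"
  by (simp add: sub_def subtree_def)

lemma vprob_single [simp]: "vprob P [c] = edge P [] c"
  by (simp add: vprob_def)

lemma vprob_subtree: "vprob (subtree P u) v = path_weight (edge P) u v"
  by (simp only: vprob_eq_path_weight subtree_simps path_weight_shift append_Nil2)

lemma vprob_append: "vprob P (u @ v) = vprob P u * path_weight (edge P) u v"
  by (simp add: vprob_eq_path_weight path_weight_append)

lemma vprob_snoc: "vprob P (u @ [b]) = vprob P u * edge P u b"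
  by (simp add: vprob_append path_weight_Cons)

lemma vprob_Cons: "vprob P (c # v) = edge P [] c * vprob (subtree P [c]) v"
  using vprob_append[of P "[c]" v] by (simp add: vprob_subtree)

lemma expect_None [simp]: "expect None f = 0"
  by (simp add: expect_def)

lemma expect_eq_tree_sum: "expect (Some P) f = tree_sum (edge P) (rounds P) [] f"
  by (simp add: expect_def tree_sum_def leaves_def vprob_eq_path_weight)

lemma expect_subtree:
  "expect (Some (subtree P u)) f = tree_sum (edge P) (rounds P - length u) u f"
  by (simp only: expect_eq_tree_sum subtree_simps tree_sum_shift append_Nil2)

lemma expect_Suc:
  assumes "rounds P = Suc n"
  shows "expect (Some P) f =
    edge P [] True * expect (Some (subtree P [True])) (\<lambda>l. f (True # l)) +
    edge P [] False * expect (Some (subtree P [False])) (\<lambda>l. f (False # l))"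
  unfolding expect_subtree using assms by (simp add: expect_eq_tree_sum tree_sum_Suc)

lemma expect_mult: "expect Q (\<lambda>l. k * f l) = k * expect Q f"
  by (cases Q) (simp_all add: expect_eq_tree_sum tree_sum_mult)

lemma expect_sum: "expect Q (\<lambda>l. \<Sum>j\<in>J. f j l) = (\<Sum>j\<in>J. expect Q (f j))"
  by (cases Q) (simp_all add: expect_eq_tree_sum tree_sum_sum)

text \<open>Conditioning sets the edges below a node of conditional mass 1 to 0. Such nodes are
  unreachable, so a conditional protocol need only be a protocol on its reachable nodes.\<close>

definition weak_protocol :: "proto \<Rightarrow> bool" where
  "weak_protocol P \<longleftrightarrow> (\<forall>u. length u < rounds P \<longrightarrow>
      (\<forall>b. 0 \<le> edge P u b) \<and> edge P u True + edge P u False \<le> 1 \<and>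
      (vprob P u \<noteq> 0 \<longrightarrow> edge P u True + edge P u False = 1))"

lemma is_protocol_weak_protocol: "is_protocol P \<Longrightarrow> weak_protocol P"
  by (auto simp: is_protocol_def weak_protocol_def)

context
  fixes P :: proto
  assumes weak: "weak_protocol P"
begin

lemma edge_nonneg: "length u < rounds P \<Longrightarrow> 0 \<le> edge P u b"
  using weak by (auto simp: weak_protocol_def)

lemma edge_sum_le_1: "length u < rounds P \<Longrightarrow> edge P u True + edge P u False \<le> 1"
  using weak by (auto simp: weak_protocol_def)

lemma edge_sum_eq_1: "length u < rounds P \<Longrightarrow> vprob P u \<noteq> 0 \<Longrightarrow> edge P u True + edge P u False = 1"
  using weak by (auto simp: weak_protocol_def)

lemma root_edge_sum: "0 < rounds P \<Longrightarrow> edge P [] True + edge P [] False = 1"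
  using edge_sum_eq_1[of "[]"] by (simp add: vprob_def)

lemma root_edge_le_1: "0 < rounds P \<Longrightarrow> edge P [] b \<le> 1"
  using root_edge_sum edge_nonneg[of "[]" "\<not> b"] by (cases b) auto

lemma weak_protocol_subtree:
  assumes "vprob P u \<noteq> 0"
  shows "weak_protocol (subtree P u)"
  unfolding weak_protocol_def
proof (intro allI impI conjI)
  fix v :: "bool list" and b
  assume "length v < rounds (subtree P u)"
  then have l: "length (u @ v) < rounds P" by simp
  show "0 \<le> edge (subtree P u) v b"
    using edge_nonneg[OF l] by simp
  show "edge (subtree P u) v True + edge (subtree P u) v False \<le> 1"
    using edge_sum_le_1[OF l] by simp
  assume "vprob (subtree P u) v \<noteq> 0"
  then have "vprob P (u @ v) \<noteq> 0"
    using assms by (simp add: vprob_append vprob_subtree)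
  then show "edge (subtree P u) v True + edge (subtree P u) v False = 1"
    using edge_sum_eq_1[OF l] by simp
qed

lemma weak_protocol_child: "edge P [] c \<noteq> 0 \<Longrightarrow> weak_protocol (subtree P [c])"
  by (rule weak_protocol_subtree) simp

lemma vprob_nonneg: "length u \<le> rounds P \<Longrightarrow> 0 \<le> vprob P u"
  unfolding vprob_eq_path_weight by (rule path_weight_nonneg) (simp add: edge_nonneg)

lemma expect_mono:
  "(\<And>l. length l = rounds P \<Longrightarrow> f l \<le> h l) \<Longrightarrow> expect (Some P) f \<le> expect (Some P) h"
  unfolding expect_eq_tree_sum by (rule tree_sum_mono) (auto intro: edge_nonneg)

lemma expect_nonneg: "(\<And>l. length l = rounds P \<Longrightarrow> 0 \<le> f l) \<Longrightarrow> 0 \<le> expect (Some P) f"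
  using expect_mono[of "\<lambda>_. 0" f] by (simp add: expect_def)

end

lemma expect_one:
  assumes "weak_protocol P"
  shows "expect (Some P) (\<lambda>_. 1) = 1"
  using assms
proof (induction "rounds P" arbitrary: P)
  case 0
  then show ?case by (simp add: expect_eq_tree_sum)
next
  case (Suc n)
  have child: "edge P [] c * expect (Some (subtree P [c])) (\<lambda>_. 1) = edge P [] c" for c
    using Suc.hyps weak_protocol_child[OF Suc.prems, of c] by (cases "edge P [] c = 0") auto
  have "expect (Some P) (\<lambda>_. 1) = edge P [] True + edge P [] False"
    using expect_Suc[of P n "\<lambda>_. 1"] Suc.hyps(2) by (simp only: child)
  then show ?case
    using root_edge_sum[OF Suc.prems] Suc.hyps(2) by simp
qed

lemma expect_le_1:
  "weak_protocol P \<Longrightarrow> (\<And>l. length l = rounds P \<Longrightarrow> f l \<le> 1) \<Longrightarrow> expect (Some P) f \<le> 1"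
  using expect_mono[of P f "\<lambda>_. 1"] expect_one[of P] by simp

section \<open>Dominated measures\<close>

abbreviation dmeas :: "bool \<Rightarrow> proto \<Rightarrow> bool list \<Rightarrow> real" where
  "dmeas isA P \<equiv> dom_measure isA (Some P)"

definition child_mean :: "bool \<Rightarrow> proto \<Rightarrow> bool \<Rightarrow> real" where
  "child_mean isA P c = expect (sub P [c]) (dom_measure isA (sub P [c]))"

lemma child_mean_eq: "child_mean isA P c =
    (if edge P [] c = 0 then 0 else expect (Some (subtree P [c])) (dmeas isA (subtree P [c])))"
  by (simp add: child_mean_def sub_eq_subtree)

lemma dmeas_0: "rounds P = 0 \<Longrightarrow> dmeas isA P l = (if outp P l = isA then 1 else 0)"
  by (simp add: dom_measure_def)

lemma dmeas_Suc:
  assumes "rounds P = Suc n"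
  shows "dmeas isA P l =
    (let b = hd l; e = edge P [] b in
     if e = 0 then 0
     else if e = 1 \<or> (0 < e \<and> e < 1 \<and> (ctrlA P [] = isA \<or> child_mean isA P b \<le> child_mean isA P (\<not> b)))
       then dmeas isA (subtree P [b]) (tl l)
     else child_mean isA P (\<not> b) / child_mean isA P b * dmeas isA (subtree P [b]) (tl l))"
  using assms by (simp add: dom_measure_def child_mean_def sub_eq_subtree Let_def)

lemma dmeas_bounds: "weak_protocol P \<Longrightarrow> 0 \<le> dmeas isA P l \<and> dmeas isA P l \<le> 1"
proof (induction "rounds P" arbitrary: P l)
  case 0
  then show ?case by (simp add: dmeas_0)
next
  case (Suc n)
  note r = Suc.hyps(2)[symmetric]
  have IH: "0 \<le> dmeas isA (subtree P [c]) x \<and> dmeas isA (subtree P [c]) x \<le> 1"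
    if "edge P [] c \<noteq> 0" for c x
    using Suc.hyps(1)[of "subtree P [c]"] r weak_protocol_child[OF Suc.prems that] by simp
  have mean_nonneg: "0 \<le> child_mean isA P c" for c
    using IH expect_nonneg[OF weak_protocol_child[OF Suc.prems]] by (simp add: child_mean_eq)
  define b where "b = hd l"
  define e where "e = edge P [] b"
  have "0 \<le> e" "e \<le> 1"
    unfolding e_def using edge_nonneg[OF Suc.prems] root_edge_le_1[OF Suc.prems] r by auto
  moreover note IH[of b "tl l", folded e_def]
  moreover have "0 \<le> child_mean isA P (\<not> b) / child_mean isA P b"
    and "child_mean isA P (\<not> b) < child_mean isA P b \<Longrightarrow>
      child_mean isA P (\<not> b) / child_mean isA P b \<le> 1"
    using mean_nonneg[of b] mean_nonneg[of "\<not> b"] by auto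
  ultimately show ?case
    unfolding dmeas_Suc[OF r] Let_def b_def[symmetric] e_def[symmetric]
    by (auto intro: mult_le_one mult_nonneg_nonneg simp del: times_divide_eq_left)
qed

context
  fixes P :: proto and n :: nat
  assumes weak: "weak_protocol P" and rounds: "rounds P = Suc n"
begin

lemma root_edge_cases:
  obtains "0 < edge P [] True" "0 < edge P [] False"
  | "edge P [] True = 0" "edge P [] False = 1"
  | "edge P [] True = 1" "edge P [] False = 0"
  using root_edge_sum[OF weak] edge_nonneg[OF weak, of "[]" True]
    edge_nonneg[OF weak, of "[]" False] rounds
  by force

lemma child_mean_nonneg: "0 \<le> child_mean isA P c"
  using expect_nonneg[OF weak_protocol_child[OF weak]] dmeas_bounds[OF weak_protocol_child[OF weak]]
  by (simp add: child_mean_eq)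

lemma dmeas_Cons:
  assumes "edge P [] c \<noteq> 0"
  shows "dmeas isA P (c # l) =
    (if edge P [] c = 1 \<or> ctrlA P [] = isA \<or> child_mean isA P c \<le> child_mean isA P (\<not> c)
     then 1 else child_mean isA P (\<not> c) / child_mean isA P c) * dmeas isA (subtree P [c]) l"
proof -
  have "0 \<le> edge P [] c" "edge P [] c \<le> 1"
    using edge_nonneg[OF weak] root_edge_le_1[OF weak] rounds by auto
  then show ?thesis
    using assms by (auto simp: dmeas_Suc[OF rounds] Let_def)
qed

lemma expect_dmeas_child:
  "edge P [] c * expect (Some (subtree P [c])) (\<lambda>l. dmeas isA P (c # l)) =
     edge P [] c * (if edge P [] c = 1 \<or> ctrlA P [] = isA \<or> child_mean isA P c \<le> child_mean isA P (\<not> c)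
                    then child_mean isA P c else child_mean isA P (\<not> c))"
proof (cases "edge P [] c = 0")
  case False
  then have "child_mean isA P c = expect (Some (subtree P [c])) (dmeas isA (subtree P [c]))"
    by (simp add: child_mean_eq)
  then show ?thesis
    using False child_mean_nonneg[of isA "\<not> c"] by (auto simp: dmeas_Cons expect_mult)
qed simp

text \<open>At a root where the other party has a genuine choice, the dominated measure scales the
  richer child down to the poorer one, so its expectation is the minimum of the two child means.\<close>

lemma expect_dmeas_Suc:
  "expect (Some P) (dmeas isA P) =
    (if 0 < edge P [] True \<and> 0 < edge P [] False \<and> ctrlA P [] \<noteq> isA
     then min (child_mean isA P True) (child_mean isA P False)
     else edge P [] True * child_mean isA P True + edge P [] False * child_mean isA P False)"
proof -
  let ?m = "child_mean isA P"
  have "expect (Some P) (dmeas isA P) =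
      edge P [] True * (if edge P [] True = 1 \<or> ctrlA P [] = isA \<or> ?m True \<le> ?m False
                        then ?m True else ?m False) +
      edge P [] False * (if edge P [] False = 1 \<or> ctrlA P [] = isA \<or> ?m False \<le> ?m True
                        then ?m False else ?m True)"
    using expect_Suc[OF rounds, of "dmeas isA P"]
    by (simp only: expect_dmeas_child not_True_eq_False not_False_eq_True)
  also have "\<dots> = (if 0 < edge P [] True \<and> 0 < edge P [] False \<and> ctrlA P [] \<noteq> isA
      then min (?m True) (?m False) else edge P [] True * ?m True + edge P [] False * ?m False)"
  proof (cases rule: root_edge_cases)
    case 1
    have sum: "edge P [] True + edge P [] False = 1"
      using root_edge_sum[OF weak] rounds by simp
    then have "edge P [] True * x + edge P [] False * x = x" for x
      by (metis distrib_right mult_1)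
    then show ?thesis
      using 1 sum by (auto simp: min_def)
  qed simp_all
  finally show ?thesis .
qed


lemma exists_unscaled_child:
  assumes "0 < expect (Some P) (dmeas isA P)"
  obtains c where "edge P [] c \<noteq> 0" and "0 < child_mean isA P c"
    and "edge P [] c = 1 \<or> ctrlA P [] = isA \<or> child_mean isA P c \<le> child_mean isA P (\<not> c)"
proof (cases "0 < edge P [] True \<and> 0 < edge P [] False \<and> ctrlA P [] \<noteq> isA")
  case True
  then have "0 < min (child_mean isA P True) (child_mean isA P False)"
    using assms by (simp add: expect_dmeas_Suc)
  then show ?thesis
    using True that[of True] that[of False] by (auto simp: min_def split: if_splits)
next
  case False
  then have "0 < edge P [] True * child_mean isA P True + edge P [] False * child_mean isA P False"
    using assms unfolding expect_dmeas_Suc by (auto split: if_splits)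
  then have "0 < edge P [] True * child_mean isA P True \<or> 0 < edge P [] False * child_mean isA P False"
    by linarith
  then obtain c where "0 < edge P [] c * child_mean isA P c"
    by blast
  then have "edge P [] c \<noteq> 0" "0 < child_mean isA P c"
    using child_mean_nonneg[of isA c] by (auto simp: zero_less_mult_iff)
  moreover have "edge P [] c = 1 \<or> ctrlA P [] = isA"
    using False calculation(1) by (cases rule: root_edge_cases) (cases c; auto)+
  ultimately show ?thesis
    using that by blast
qed
end

lemma add_min_pos:
  fixes p q x y a b :: real
  assumes "0 < p" "0 < q" "0 \<le> x" "0 \<le> y" "0 \<le> a" "0 \<le> b" "0 < x + a" "0 < y + b"
  shows "0 < p * x + q * y + min a b"
proof (cases "min a b = 0")
  case True
  then have "0 < p * x \<or> 0 < q * y"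
    using assms by (auto simp: min_def split: if_splits)
  then show ?thesis
    using assms True by (smt (verit) mult_nonneg_nonneg)
next
  case False
  then show ?thesis
    using assms by (smt (verit) mult_nonneg_nonneg)
qed

lemma expect_dmeas_pos:
  "weak_protocol P \<Longrightarrow> 0 < expect (Some P) (dmeas isA P) + expect (Some P) (dmeas (\<not> isA) P)"
proof (induction "rounds P" arbitrary: P isA)
  case 0
  then show ?case by (simp add: expect_eq_tree_sum dmeas_0)
next
  case (Suc n)
  note r = Suc.hyps(2)[symmetric]
  have IH: "0 < child_mean x P c + child_mean (\<not> x) P c" if "edge P [] c \<noteq> 0" for x c
    using Suc.hyps(1)[of "subtree P [c]"] r weak_protocol_child[OF Suc.prems that]
    by (simp add: child_mean_eq that)
  have mean_nonneg: "0 \<le> child_mean x P c" for x c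
    using child_mean_nonneg[OF Suc.prems r] .
  note expect_root = expect_dmeas_Suc[OF Suc.prems r]
  show ?case
  proof (cases rule: root_edge_cases[OF Suc.prems r])
    case 1
    define k where "k = ctrlA P []"
    have "0 < edge P [] True * child_mean k P True + edge P [] False * child_mean k P False
        + min (child_mean (\<not> k) P True) (child_mean (\<not> k) P False)"
      using 1 IH[where x = k and c = True] IH[where x = k and c = False]
      by (intro add_min_pos) (simp_all add: mean_nonneg)
    then show ?thesis
      using 1 unfolding expect_root k_def[symmetric]
      by (cases isA; cases k) (simp_all add: add.commute)
  next
    case 2
    then show ?thesis
      using IH[where x = isA and c = False] by (simp add: expect_root)
  next
    case 3
    then show ?thesis
      using IH[where x = isA and c = True] by (simp add: expect_root)
  qed
qed

lemma dmeas_eq_1_on_support: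
  "weak_protocol P \<Longrightarrow> 0 < expect (Some P) (dmeas isA P) \<Longrightarrow>
   \<exists>l. length l = rounds P \<and> vprob P l \<noteq> 0 \<and> dmeas isA P l = 1"
proof (induction "rounds P" arbitrary: P)
  case 0
  then have "dmeas isA P [] = 1"
    by (simp add: expect_eq_tree_sum dmeas_0 split: if_splits)
  then show ?case
    using 0 by (auto simp: vprob_def)
next
  case (Suc n)
  note r = Suc.hyps(2)[symmetric]
  obtain c where edge: "edge P [] c \<noteq> 0" and mean: "0 < child_mean isA P c"
    and unscaled: "edge P [] c = 1 \<or> ctrlA P [] = isA \<or> child_mean isA P c \<le> child_mean isA P (\<not> c)"
    using exists_unscaled_child[OF Suc.prems(1) r Suc.prems(2)] .
  obtain l where l: "length l = n" "vprob (subtree P [c]) l \<noteq> 0" "dmeas isA (subtree P [c]) l = 1"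
    using Suc.hyps(1)[of "subtree P [c]"] r weak_protocol_child[OF Suc.prems(1) edge] mean edge
    by (auto simp: child_mean_eq)
  then have "dmeas isA P (c # l) = 1"
    using unscaled edge by (simp add: dmeas_Cons[OF Suc.prems(1) r])
  then show ?case
    using l edge r by (intro exI[of _ "c # l"]) (simp add: vprob_Cons)
qed

section \<open>A greedy attack\<close>

text \<open>Steering towards the child where the opponent's dominated measure has the smaller mean
  realises the minimum in \<open>expect_dmeas_Suc\<close>.\<close>

primrec greedy_attack :: "bool \<Rightarrow> nat \<Rightarrow> proto \<Rightarrow> bool list \<Rightarrow> bool" where
  "greedy_attack isA 0 P u = True"
| "greedy_attack isA (Suc n) P u = (case u of
      [] \<Rightarrow> (if edge P [] True = 0 then False else if edge P [] False = 0 then True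
             else child_mean (\<not> isA) P True \<le> child_mean (\<not> isA) P False)
    | c # v \<Rightarrow> greedy_attack isA n (subtree P [c]) v)"

lemma greedy_attack_Cons:
  "(\<lambda>v. greedy_attack isA (Suc n) P (c # v)) = greedy_attack isA n (subtree P [c])"
  by (simp add: fun_eq_iff)

lemma greedy_attack_root_edge:
  assumes "weak_protocol P" "rounds P = Suc n"
  shows "edge P [] (greedy_attack isA (Suc n) P []) \<noteq> 0"
  using root_edge_sum[OF assms(1)] assms(2)
  by (cases "child_mean (\<not> isA) P True \<le> child_mean (\<not> isA) P False") auto

lemma aedge_subtree: "aedge (subtree P [c]) isA (\<lambda>v. \<sigma> (c # v)) = (\<lambda>v. aedge P isA \<sigma> ([c] @ v))"
  by (simp add: aedge_def fun_eq_iff)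

lemma aedge_nonneg: "weak_protocol P \<Longrightarrow> length u < rounds P \<Longrightarrow> 0 \<le> aedge P isA \<sigma> u b"
  by (auto simp: aedge_def intro: edge_nonneg)

lemma avis_Cons:
  "avis P isA \<sigma> (c # v) = aedge P isA \<sigma> [] c * avis (subtree P [c]) isA (\<lambda>v. \<sigma> (c # v)) v"
  unfolding avis_eq_path_weight aedge_subtree path_weight_shift by (simp add: path_weight_Cons)

lemma attack_value_eq_tree_sum:
  "attack_value P isA \<sigma> = tree_sum (aedge P isA \<sigma>) (rounds P) [] (\<lambda>l. if outp P l = isA then 1 else 0)"
  by (simp add: attack_value_def tree_sum_def leaves_def avis_eq_path_weight)

lemma attack_value_Suc:
  assumes "rounds P = Suc n"
  shows "attack_value P isA \<sigma> =
    aedge P isA \<sigma> [] True * attack_value (subtree P [True]) isA (\<lambda>v. \<sigma> (True # v)) +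
    aedge P isA \<sigma> [] False * attack_value (subtree P [False]) isA (\<lambda>v. \<sigma> (False # v))"
  unfolding attack_value_eq_tree_sum aedge_subtree tree_sum_shift using assms
  by (simp add: tree_sum_Suc)

lemma attack_value_le_1:
  assumes "weak_protocol P"
  shows "attack_value P isA \<sigma> \<le> 1"
proof -
  have nonneg: "0 \<le> aedge P isA \<sigma> ([] @ v) b" if "length v < rounds P" for v b
    using aedge_nonneg[OF assms] that by simp
  have "attack_value P isA \<sigma> \<le> tree_sum (aedge P isA \<sigma>) (rounds P) [] (\<lambda>_. 1)"
    unfolding attack_value_eq_tree_sum by (rule tree_sum_mono) (use nonneg in auto)
  also have "\<dots> \<le> 1"
    using nonneg edge_sum_le_1[OF assms] by (intro tree_sum_subprob) (auto simp: aedge_def)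
  finally show ?thesis .
qed

lemma valid_attacker_Suc:
  assumes weak: "weak_protocol P" and rounds: "rounds P = Suc n"
    and root: "ctrlA P [] = isA \<Longrightarrow> 0 < edge P [] (\<sigma> [])"
    and child: "\<And>c. 0 < aedge P isA \<sigma> [] c \<Longrightarrow> valid_attacker (subtree P [c]) isA (\<lambda>v. \<sigma> (c # v))"
  shows "valid_attacker P isA \<sigma>"
  unfolding valid_attacker_def
proof (intro allI impI)
  fix u
  assume u: "length u < rounds P" "ctrlA P u = isA" "0 < avis P isA \<sigma> u"
  show "0 < edge P u (\<sigma> u)"
  proof (cases u)
    case Nil
    then show ?thesis using root u by simp
  next
    case (Cons c v)
    have "0 \<le> aedge P isA \<sigma> [] c"
      using aedge_nonneg[OF weak] rounds by simp
    then have "0 < aedge P isA \<sigma> [] c" "0 < avis (subtree P [c]) isA (\<lambda>v. \<sigma> (c # v)) v"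
      using u(3) Cons by (auto simp: avis_Cons zero_less_mult_iff)
    then show ?thesis
      using child u Cons unfolding valid_attacker_def by auto
  qed
qed

lemma greedy_attack_valid:
  "weak_protocol P \<Longrightarrow> valid_attacker P isA (greedy_attack isA (rounds P) P)"
proof (induction "rounds P" arbitrary: P)
  case 0
  then show ?case by (simp add: valid_attacker_def)
next
  case (Suc n)
  note r = Suc.hyps(2)[symmetric]
  have root: "edge P [] (greedy_attack isA (Suc n) P []) \<noteq> 0"
    using greedy_attack_root_edge[OF Suc.prems r] .
  show ?case
    unfolding r
  proof (rule valid_attacker_Suc[OF Suc.prems r])
    show "0 < edge P [] (greedy_attack isA (Suc n) P [])"
      using root edge_nonneg[OF Suc.prems, of "[]"] r by (simp add: less_le)
  next
    fix c
    assume "0 < aedge P isA (greedy_attack isA (Suc n) P) [] c"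
    then have "edge P [] c \<noteq> 0"
      using root by (auto simp: aedge_def split: if_splits)
    then show "valid_attacker (subtree P [c]) isA (\<lambda>v. greedy_attack isA (Suc n) P (c # v))"
      using Suc.hyps(1)[of "subtree P [c]"] r weak_protocol_child[OF Suc.prems]
      by (simp add: greedy_attack_Cons)
  qed
qed

lemma attack_value_attacker_root:
  assumes "rounds P = Suc n" and "ctrlA P [] = isA"
  shows "attack_value P isA \<sigma> = attack_value (subtree P [\<sigma> []]) isA (\<lambda>v. \<sigma> (\<sigma> [] # v))"
  using assms by (cases "\<sigma> []") (simp_all add: attack_value_Suc aedge_def)

lemma attack_value_honest_root:
  assumes "rounds P = Suc n" and "ctrlA P [] \<noteq> isA"
  shows "attack_value P isA \<sigma> =
    edge P [] True * attack_value (subtree P [True]) isA (\<lambda>v. \<sigma> (True # v)) +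
    edge P [] False * attack_value (subtree P [False]) isA (\<lambda>v. \<sigma> (False # v))"
  using assms by (simp add: attack_value_Suc aedge_def)

lemma expect_dmeas_greedy_root:
  assumes weak: "weak_protocol P" and rounds: "rounds P = Suc n" and "ctrlA P [] = isA"
  shows "expect (Some P) (dmeas (\<not> isA) P) = child_mean (\<not> isA) P (greedy_attack isA (Suc n) P [])"
  using assms
  by (cases rule: root_edge_cases[OF weak rounds]) (auto simp: expect_dmeas_Suc[OF weak rounds] min_def)

lemma greedy_attack_value:
  "weak_protocol P \<Longrightarrow>
   1 - expect (Some P) (dmeas (\<not> isA) P) \<le> attack_value P isA (greedy_attack isA (rounds P) P)"
proof (induction "rounds P" arbitrary: P)
  case 0
  then show ?case by (simp add: expect_eq_tree_sum dmeas_0 attack_value_eq_tree_sum)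
next
  case (Suc n)
  note r = Suc.hyps(2)[symmetric]
  define \<sigma> where "\<sigma> = greedy_attack isA (Suc n) P"
  let ?m = "child_mean (\<not> isA) P"
  have IH: "1 - ?m c \<le> attack_value (subtree P [c]) isA (\<lambda>v. \<sigma> (c # v))" if "edge P [] c \<noteq> 0" for c
    using Suc.hyps(1)[of "subtree P [c]"] r weak_protocol_child[OF Suc.prems that]
    by (simp add: \<sigma>_def greedy_attack_Cons child_mean_eq that)
  have "1 - expect (Some P) (dmeas (\<not> isA) P) \<le> attack_value P isA \<sigma>"
  proof (cases "ctrlA P [] = isA")
    case True
    then show ?thesis
      using IH greedy_attack_root_edge[OF Suc.prems r]
      by (simp add: attack_value_attacker_root[OF r] expect_dmeas_greedy_root[OF Suc.prems r] \<sigma>_def)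
  next
    case False
    have child: "edge P [] c * (1 - ?m c) \<le> edge P [] c * attack_value (subtree P [c]) isA (\<lambda>v. \<sigma> (c # v))"
      for c
      using IH[of c] edge_nonneg[OF Suc.prems, of "[]" c] r
      by (cases "edge P [] c = 0") (auto intro: mult_left_mono)
    have "1 - expect (Some P) (dmeas (\<not> isA) P) =
        edge P [] True * (1 - ?m True) + edge P [] False * (1 - ?m False)"
      using False root_edge_sum[OF Suc.prems] r
      by (simp add: expect_dmeas_Suc[OF Suc.prems r] algebra_simps)
    then show ?thesis
      using child[of True] child[of False] unfolding attack_value_honest_root[OF r False]
      by linarith
  qed
  then show ?case
    using r by (simp add: \<sigma>_def)
qed

lemma Best_lower_bound:
  assumes "weak_protocol P"
  shows "1 - expect (Some P) (dom_measure (\<not> isA) (Some P)) \<le> Best isA (Some P)"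
proof -
  let ?\<sigma> = "greedy_attack isA (rounds P) P"
  have "attack_value P isA ?\<sigma> \<le> (SUP \<sigma>\<in>{\<sigma>. valid_attacker P isA \<sigma>}. attack_value P isA \<sigma>)"
  proof (rule cSUP_upper)
    show "?\<sigma> \<in> {\<sigma>. valid_attacker P isA \<sigma>}"
      using greedy_attack_valid[OF assms] by simp
    show "bdd_above (attack_value P isA ` {\<sigma>. valid_attacker P isA \<sigma>})"
      using attack_value_le_1[OF assms] by (intro bdd_aboveI2[where M = 1])
  qed
  then show ?thesis
    using greedy_attack_value[OF assms, of isA] by (simp add: Best_def)
qed

section \<open>Conditioning\<close>

lemma subE_eq:
  "subE (Some R) u M = (if vprob R u = 0 then 0 else expect (Some (subtree R u)) (\<lambda>l. M (u @ l)))"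
  by (simp add: subE_def subo_def sub_eq_subtree)

lemma subE_Nil: "subE (Some R) [] M = expect (Some R) M"
  by (simp add: subE_eq vprob_def expect_eq_tree_sum expect_subtree)

lemma subE_leaf: "length l = rounds R \<Longrightarrow> vprob R l \<noteq> 0 \<Longrightarrow> subE (Some R) l M = M l"
  by (simp add: subE_eq expect_subtree)

lemma subE_bounds:
  assumes "weak_protocol R" and "\<And>l. 0 \<le> M l \<and> M l \<le> 1"
  shows "0 \<le> subE (Some R) u M \<and> subE (Some R) u M \<le> 1"
  using assms expect_nonneg[OF weak_protocol_subtree] expect_le_1[OF weak_protocol_subtree]
  by (simp add: subE_eq)

lemma subE_snoc:
  assumes "length u < rounds R" and "vprob R u \<noteq> 0"
  shows "subE (Some R) u M =
    edge R u True * subE (Some R) (u @ [True]) M + edge R u False * subE (Some R) (u @ [False]) M"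
proof -
  obtain k where k: "rounds R - length u = Suc k"
    using assms(1) by (metis Suc_diff_Suc)
  then have "rounds R - Suc (length u) = k"
    by simp
  then have child: "edge R u c * tree_sum (edge R) k (u @ [c]) (\<lambda>l. M (u @ c # l)) =
      edge R u c * subE (Some R) (u @ [c]) M" for c
    using assms(2) by (cases "edge R u c = 0") (simp_all add: subE_eq expect_subtree vprob_snoc)
  show ?thesis
    using assms(2) k by (simp add: subE_eq expect_subtree tree_sum_Suc child)
qed

definition support :: "proto \<Rightarrow> bool list set" where
  "support R = {l. length l = rounds R \<and> vprob R l \<noteq> 0}"

lemma finite_support: "finite (support R)"
  using finite_lists_length[of "rounds R"] by (rule rev_finite_subset) (auto simp: support_def)

locale conditioning =
  fixes R :: proto and M :: "bool list \<Rightarrow> real"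
  assumes weak: "weak_protocol R"
    and M_bounds: "\<And>l. 0 \<le> M l \<and> M l \<le> 1"
    and expect_ne_1: "expect (Some R) M \<noteq> 1"
begin

abbreviation "S u \<equiv> subE (Some R) u M"
abbreviation "E \<equiv> expect (Some R) M"

definition conditioned :: proto where
  "conditioned = R\<lparr>edge := (\<lambda>u b. if S u = 1 then 0 else edge R u b * (1 - S (u @ [b])) / (1 - S u))\<rparr>"

lemma cond_eq_conditioned: "cond (Some R) M = Some conditioned"
  using expect_ne_1 by (simp add: cond_def conditioned_def)

lemma conditioned_simps [simp]:
  "rounds conditioned = rounds R" "ctrlA conditioned = ctrlA R" "outp conditioned = outp R"
  "edge conditioned u b = (if S u = 1 then 0 else edge R u b * (1 - S (u @ [b])) / (1 - S u))"
  by (simp_all add: conditioned_def)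

lemma S_bounds: "0 \<le> S u" "S u \<le> 1"
  using subE_bounds[OF weak M_bounds] by auto

lemma E_less_1: "E < 1"
  using expect_le_1[OF weak, of M] M_bounds expect_ne_1 by fastforce

lemma S_child_eq_1:
  assumes u: "length u < rounds R" and S: "S u = 1" and edge: "edge R u b \<noteq> 0"
  shows "S (u @ [b]) = 1"
proof (rule ccontr)
  have reach: "vprob R u \<noteq> 0"
    using S by (auto simp: subE_eq)
  have nonneg: "0 \<le> edge R u c" for c
    using edge_nonneg[OF weak u] .
  have le: "edge R u c * S (u @ [c]) \<le> edge R u c" for c
    using S_bounds[of "u @ [c]"] nonneg[of c] by (simp add: mult_left_le)
  assume "S (u @ [b]) \<noteq> 1"
  then have "edge R u b * S (u @ [b]) < edge R u b"
    using S_bounds[of "u @ [b]"] edge nonneg[of b] by simp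
  then show False
    using le[of "\<not> b"] S subE_snoc[OF u reach, of M] edge_sum_eq_1[OF weak u reach]
    by (cases b) auto
qed

text \<open>The defining edge weights telescope along a path.\<close>

lemma vprob_conditioned: "length u \<le> rounds R \<Longrightarrow> vprob conditioned u * (1 - E) = vprob R u * (1 - S u)"
proof (induction u rule: rev_induct)
  case Nil
  then show ?case by (simp add: vprob_def subE_Nil)
next
  case (snoc b u)
  have u: "length u < rounds R"
    using snoc.prems by simp
  have IH: "vprob conditioned u * (1 - E) = vprob R u * (1 - S u)"
    using snoc.IH snoc.prems by simp
  consider "vprob R u = 0" | "S u = 1" | "vprob R u \<noteq> 0" "S u \<noteq> 1"
    by blast
  then show ?case
  proof cases
    case 1
    then have "vprob conditioned u = 0"
      using IH E_less_1 by simp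
    then show ?thesis
      using 1 by (simp add: vprob_snoc)
  next
    case 2
    then have "vprob R (u @ [b]) * (1 - S (u @ [b])) = 0"
      using S_child_eq_1[OF u] by (cases "edge R u b = 0") (simp_all add: vprob_snoc)
    then show ?thesis
      using 2 by (simp add: vprob_snoc)
  next
    case 3
    have "vprob conditioned (u @ [b]) * (1 - E) =
        (vprob conditioned u * (1 - E)) * (edge R u b * (1 - S (u @ [b])) / (1 - S u))"
      using 3 by (simp add: vprob_snoc)
    also have "\<dots> = vprob R (u @ [b]) * (1 - S (u @ [b]))"
      unfolding IH using 3 by (simp add: vprob_snoc)
    finally show ?thesis .
  qed
qed

lemma weak_protocol_conditioned: "weak_protocol conditioned"
  unfolding weak_protocol_def
proof (intro allI impI conjI)
  fix u :: "bool list" and b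
  assume "length u < rounds conditioned"
  then have u: "length u < rounds R"
    by simp
  show "0 \<le> edge conditioned u b"
    using edge_nonneg[OF weak u, of b] S_bounds[of u] S_bounds[of "u @ [b]"] by simp
  have sum: "edge conditioned u True + edge conditioned u False = 1"
    if reach: "vprob R u \<noteq> 0" and S: "S u \<noteq> 1"
  proof -
    have "edge R u True * (1 - S (u @ [True])) + edge R u False * (1 - S (u @ [False])) = 1 - S u"
      using subE_snoc[OF u reach, of M] edge_sum_eq_1[OF weak u reach] by (simp add: algebra_simps)
    then show ?thesis
      using S by (simp add: add_divide_distrib[symmetric])
  qed
  show "edge conditioned u True + edge conditioned u False \<le> 1"
  proof (cases "vprob R u = 0")
    case True
    then have "S u = 0" "S (u @ [c]) = 0" for c
      by (simp_all add: subE_eq vprob_snoc)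
    then show ?thesis
      using edge_sum_le_1[OF weak u] by simp
  qed (use sum in \<open>cases "S u = 1"; simp\<close>)
  assume "vprob conditioned u \<noteq> 0"
  then have "vprob R u * (1 - S u) \<noteq> 0"
    using vprob_conditioned[of u] u E_less_1 by auto
  then show "edge conditioned u True + edge conditioned u False = 1"
    using sum by simp
qed

lemma vprob_conditioned_leaf:
  "length l = rounds R \<Longrightarrow> vprob conditioned l * (1 - E) = vprob R l * (1 - M l)"
  using vprob_conditioned[of l] subE_leaf[of l R M] by (cases "vprob R l = 0") auto

lemma expect_conditioned: "expect (Some conditioned) f * (1 - E) = expect (Some R) (\<lambda>l. f l * (1 - M l))"
proof -
  have "expect (Some conditioned) f * (1 - E) = (\<Sum>l\<in>leaves R. f l * (vprob conditioned l * (1 - E)))"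
    unfolding expect_def[of "Some conditioned"] by (simp add: leaves_def sum_distrib_left mult_ac)
  also have "\<dots> = (\<Sum>l\<in>leaves R. vprob R l * (f l * (1 - M l)))"
    by (rule sum.cong) (simp_all add: leaves_def vprob_conditioned_leaf)
  finally show ?thesis
    by (simp add: expect_def)
qed

lemma support_conditioned: "support conditioned \<subseteq> support R"
  using vprob_conditioned_leaf E_less_1 by (force simp: support_def)

lemma support_conditioned_psubset:
  assumes "l \<in> support R" and "M l = 1"
  shows "support conditioned \<subset> support R"
proof -
  have "vprob conditioned l = 0"
    using vprob_conditioned_leaf[of l] assms E_less_1 by (simp add: support_def)
  then show ?thesis
    using support_conditioned assms(1) by (auto simp: support_def)
qed

lemma S_eq_0_if_E_eq_0: "E = 0 \<Longrightarrow> length u \<le> rounds R \<Longrightarrow> S u = 0"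
proof (induction u rule: rev_induct)
  case Nil
  then show ?case by (simp add: subE_Nil)
next
  case (snoc b u)
  have u: "length u < rounds R"
    using snoc.prems by simp
  show ?case
  proof (cases "vprob R (u @ [b]) = 0")
    case False
    then have reach: "vprob R u \<noteq> 0" and edge: "edge R u b \<noteq> 0"
      by (auto simp: vprob_snoc)
    have nonneg: "0 \<le> edge R u c * S (u @ [c])" for c
      using edge_nonneg[OF weak u, of c] S_bounds[of "u @ [c]"] by simp
    have "S u = 0"
      using snoc by simp
    then have "edge R u True * S (u @ [True]) = 0 \<and> edge R u False * S (u @ [False]) = 0"
      using subE_snoc[OF u reach, of M] nonneg[of True] nonneg[of False] by linarith
    then show ?thesis
      using edge by (cases b) auto
  qed (simp add: subE_eq)
qed

end

lemma expect_mult_one_minus_eq_0: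
  assumes weak: "weak_protocol R" and M_bounds: "\<And>l. 0 \<le> M l \<and> M l \<le> 1"
    and E: "expect (Some R) M = 1"
  shows "expect (Some R) (\<lambda>l. f l * (1 - M l)) = 0"
proof -
  have "expect (Some R) (\<lambda>l. 1 - M l) = 0"
    using expect_one[OF weak] E unfolding expect_def by (simp add: sum_subtractf right_diff_distrib)
  moreover have "0 \<le> vprob R l * (1 - M l)" if "l \<in> leaves R" for l
    using vprob_nonneg[OF weak, of l] M_bounds[of l] that by (simp add: leaves_def)
  ultimately have "vprob R l * (1 - M l) = 0" if "l \<in> leaves R" for l
    using that sum_nonneg_eq_0_iff[of "leaves R" "\<lambda>l. vprob R l * (1 - M l)"]
    by (simp add: expect_def leaves_def finite_lists_length)
  then show ?thesis
    unfolding expect_def by (auto intro!: sum.neutral simp: mult.left_commute[of "vprob R _"])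
qed

lemma
  assumes "pred_option weak_protocol Q" and "\<And>l. 0 \<le> M l \<and> M l \<le> 1"
  shows pred_option_weak_protocol_cond: "pred_option weak_protocol (cond Q M)"
    and expect_cond: "expect (cond Q M) f * (1 - expect Q M) = expect Q (\<lambda>l. f l * (1 - M l))"
proof -
  have "pred_option weak_protocol (cond Q M) \<and>
      expect (cond Q M) f * (1 - expect Q M) = expect Q (\<lambda>l. f l * (1 - M l))"
  proof (cases Q)
    case (Some R)
    show ?thesis
    proof (cases "expect (Some R) M = 1")
      case True
      then show ?thesis
        using Some assms expect_mult_one_minus_eq_0[of R M] by (simp add: cond_def)
    next
      case False
      then interpret conditioning R M
        using Some assms by unfold_locales simp_all
      show ?thesis
        using Some cond_eq_conditioned weak_protocol_conditioned expect_conditioned by simp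
    qed
  qed (simp add: cond_def)
  then show "pred_option weak_protocol (cond Q M)"
    and "expect (cond Q M) f * (1 - expect Q M) = expect Q (\<lambda>l. f l * (1 - M l))"
    by simp_all
qed

definition agree :: "proto \<Rightarrow> proto \<Rightarrow> bool" where
  "agree P P' \<longleftrightarrow> rounds P = rounds P' \<and> ctrlA P = ctrlA P' \<and> outp P = outp P' \<and>
     (\<forall>u. length u < rounds P \<longrightarrow> edge P u = edge P' u)"

lemma agree_expect: "agree P P' \<Longrightarrow> expect (Some P) f = expect (Some P') f"
  unfolding expect_eq_tree_sum agree_def by (auto intro!: tree_sum_cong_weights)

lemma agree_subtree: "agree P P' \<Longrightarrow> agree (subtree P [c]) (subtree P' [c])"
  unfolding agree_def by auto

lemma agree_dmeas: "agree P P' \<Longrightarrow> dmeas isA P = dmeas isA P'"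
proof (induction "rounds P" arbitrary: P P')
  case 0
  then show ?case by (auto simp: agree_def fun_eq_iff dmeas_0)
next
  case (Suc n)
  have r: "rounds P = Suc n" "rounds P' = Suc n"
    using Suc.hyps(2) Suc.prems by (simp_all add: agree_def)
  have sub: "dmeas isA (subtree P [c]) = dmeas isA (subtree P' [c])" for c
    using Suc.hyps(1)[of "subtree P [c]" "subtree P' [c]"] agree_subtree[OF Suc.prems] r by simp
  have root: "edge P [] = edge P' []" "ctrlA P = ctrlA P'"
    using Suc.prems r by (simp_all add: agree_def)
  have mean: "child_mean isA P c = child_mean isA P' c" for c
    unfolding child_mean_eq sub root using agree_expect[OF agree_subtree[OF Suc.prems]] by simp
  show ?case
    by (rule ext) (simp only: dmeas_Suc[OF r(1)] dmeas_Suc[OF r(2)] sub root mean)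
qed

lemma cond_agree:
  assumes "weak_protocol R" and "\<And>l. 0 \<le> M l \<and> M l \<le> 1" and "expect (Some R) M = 0"
  shows "\<exists>R'. cond (Some R) M = Some R' \<and> agree R R'"
proof -
  interpret conditioning R M
    using assms by unfold_locales simp_all
  show ?thesis
    using cond_eq_conditioned S_eq_0_if_E_eq_0 assms(3) by (auto simp: agree_def fun_eq_iff)
qed

definition support_size :: "proto option \<Rightarrow> nat" where
  "support_size Q = (case Q of None \<Rightarrow> 0 | Some R \<Rightarrow> card (support R))"

lemma support_size_cond_le:
  assumes "weak_protocol R" and "\<And>l. 0 \<le> M l \<and> M l \<le> 1"
  shows "support_size (cond (Some R) M) \<le> card (support R)"
proof (cases "expect (Some R) M = 1")
  case False
  interpret conditioning R M
    using False assms by unfold_locales simp_all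
  show ?thesis
    using cond_eq_conditioned card_mono[OF finite_support support_conditioned]
    by (simp add: support_size_def)
qed (simp add: cond_def support_size_def)

lemma support_size_cond_less:
  assumes "weak_protocol R" and "\<And>l. 0 \<le> M l \<and> M l \<le> 1"
    and "l \<in> support R" and "M l = 1"
  shows "support_size (cond (Some R) M) < card (support R)"
proof (cases "expect (Some R) M = 1")
  case True
  then show ?thesis
    using assms(3) finite_support card_gt_0_iff by (fastforce simp: cond_def support_size_def)
next
  case False
  interpret conditioning R M
    using False assms by unfold_locales simp_all
  show ?thesis
    using cond_eq_conditioned
      psubset_card_mono[OF finite_support support_conditioned_psubset[OF assms(3,4)]]
    by (simp add: support_size_def)
qed

lemma support_size_cond_dmeas_less:
  assumes "weak_protocol R" and "0 < expect (Some R) (dmeas isA R)"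
  shows "support_size (cond (Some R) (dmeas isA R)) < card (support R)"
proof -
  obtain l where "l \<in> support R" "dmeas isA R l = 1"
    using dmeas_eq_1_on_support[OF assms] by (auto simp: support_def)
  then show ?thesis
    using support_size_cond_less[where M = "dmeas isA R", OF assms(1) dmeas_bounds[OF assms(1)]]
    by blast
qed

section \<open>The alternating sequence of conditional protocols\<close>

lemma PiA_0: "PiA Q 0 = Q"
  by (simp add: PiA_def)

lemma PiB_eq: "PiB Q j = cond (PiA Q j) (MA (PiA Q j))"
  by (cases j) (simp_all add: PiA_def PiB_def Let_def)

lemma PiA_Suc: "PiA Q (Suc j) = cond (PiB Q j) (MB (PiB Q j))"
  by (simp add: PiA_def PiB_def Let_def)

lemma dom_measure_None [simp]: "dom_measure isA None l = 0"
  by (simp add: dom_measure_def)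

lemma Best_None [simp]: "Best isA None = 1"
  by (simp add: Best_def)

lemma dom_measure_bounds:
  "pred_option weak_protocol Q \<Longrightarrow> 0 \<le> dom_measure isA Q l \<and> dom_measure isA Q l \<le> 1"
  by (cases Q) (simp_all add: dmeas_bounds)

lemma expect_dom_measure_bounds:
  "pred_option weak_protocol Q \<Longrightarrow> 0 \<le> expect Q (dom_measure isA Q) \<and> expect Q (dom_measure isA Q) \<le> 1"
  by (cases Q) (simp_all add: expect_nonneg expect_le_1 dmeas_bounds)

locale protocol_sequence =
  fixes P :: proto
  assumes protocol: "is_protocol P"
begin

abbreviation "QA j \<equiv> PiA (Some P) j"
abbreviation "QB j \<equiv> PiB (Some P) j"

definition a :: "nat \<Rightarrow> real" where
  "a j = expect (QA j) (MA (QA j))"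

definition b :: "nat \<Rightarrow> real" where
  "b j = expect (QB j) (MB (QB j))"

definition weight :: "nat \<Rightarrow> bool list \<Rightarrow> real" where
  "weight j l = (\<Prod>t<j. (1 - MA (QA t) l) * (1 - MB (QB t) l))"

definition scale :: "nat \<Rightarrow> real" where
  "scale j = (\<Prod>t<j. (1 - a t) * (1 - b t))"

lemma weak_QA: "pred_option weak_protocol (QA j)"
  and weak_QB: "pred_option weak_protocol (QB j)"
proof -
  have "pred_option weak_protocol (QA j) \<and> pred_option weak_protocol (QB j)"
  proof (induction j)
    case 0
    then show ?case
      using is_protocol_weak_protocol[OF protocol]
      by (simp add: PiA_0 PiB_eq pred_option_weak_protocol_cond dom_measure_bounds)
  next
    case (Suc j)
    then have "pred_option weak_protocol (QA (Suc j))"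
      by (simp add: PiA_Suc pred_option_weak_protocol_cond dom_measure_bounds)
    then show ?case
      by (simp add: PiB_eq pred_option_weak_protocol_cond dom_measure_bounds)
  qed
  then show "pred_option weak_protocol (QA j)" "pred_option weak_protocol (QB j)"
    by simp_all
qed

lemma MA_bounds: "0 \<le> MA (QA j) l \<and> MA (QA j) l \<le> 1"
  using dom_measure_bounds[OF weak_QA] .

lemma MB_bounds: "0 \<le> MB (QB j) l \<and> MB (QB j) l \<le> 1"
  using dom_measure_bounds[OF weak_QB] .

lemma a_bounds: "0 \<le> a j" "a j \<le> 1"
  using expect_dom_measure_bounds[OF weak_QA] by (auto simp: a_def)

lemma b_bounds: "0 \<le> b j" "b j \<le> 1"
  using expect_dom_measure_bounds[OF weak_QB] by (auto simp: b_def)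

lemma alpha_le_a: "1 - BestB (QA j) \<le> a j"
proof (cases "QA j")
  case (Some R)
  then show ?thesis
    using weak_QA[of j] Best_lower_bound[of R False] by (simp add: a_def)
qed (simp add: a_def)

lemma beta_le_b: "1 - BestA (QB j) \<le> b j"
proof (cases "QB j")
  case (Some R)
  then show ?thesis
    using weak_QB[of j] Best_lower_bound[of R True] by (simp add: b_def)
qed (simp add: b_def)

text \<open>Each conditioning step rescales expectations by one minus the mass of the measure
  conditioned on, so all members of the sequence are reweightings of \<open>P\<close>.\<close>

lemma expect_QB_QA:
  assumes "\<And>f. expect (QA j) f * scale j = expect (Some P) (\<lambda>l. f l * weight j l)"
  shows "expect (QB j) f * (scale j * (1 - a j)) =
    expect (Some P) (\<lambda>l. f l * (weight j l * (1 - MA (QA j) l)))"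
proof -
  have "expect (QB j) f * (scale j * (1 - a j)) = (expect (QB j) f * (1 - a j)) * scale j"
    by (simp only: mult_ac)
  also have "\<dots> = expect (QA j) (\<lambda>l. f l * (1 - MA (QA j) l)) * scale j"
    using expect_cond[OF weak_QA MA_bounds] by (simp add: PiB_eq a_def)
  also have "\<dots> = expect (Some P) (\<lambda>l. f l * (weight j l * (1 - MA (QA j) l)))"
    using assms[of "\<lambda>l. f l * (1 - MA (QA j) l)"] by (simp add: mult_ac)
  finally show ?thesis .
qed

lemma expect_QA: "expect (QA j) f * scale j = expect (Some P) (\<lambda>l. f l * weight j l)"
proof (induction j arbitrary: f)
  case 0
  then show ?case by (simp add: PiA_0 scale_def weight_def)
next
  case (Suc j)
  have "expect (QA (Suc j)) f * scale (Suc j) =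
      (expect (QA (Suc j)) f * (1 - b j)) * (scale j * (1 - a j))"
    by (simp add: scale_def mult_ac)
  also have "\<dots> = expect (QB j) (\<lambda>l. f l * (1 - MB (QB j) l)) * (scale j * (1 - a j))"
    using expect_cond[OF weak_QB MB_bounds] by (simp add: PiA_Suc b_def)
  also have "\<dots> = expect (Some P) (\<lambda>l. f l * weight (Suc j) l)"
    using expect_QB_QA[OF Suc.IH, of "\<lambda>l. f l * (1 - MB (QB j) l)"]
    by (simp add: weight_def mult_ac)
  finally show ?case .
qed

lemma expect_QB: "expect (QB j) f * (scale j * (1 - a j)) =
    expect (Some P) (\<lambda>l. f l * (weight j l * (1 - MA (QA j) l)))"
  using expect_QB_QA expect_QA by blast

lemma expect_CA_ge: "(\<Sum>j\<le>z. scale j * a j) \<le> expect (Some P) (CA (Some P) z)"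
proof -
  have "scale j * a j \<le> expect (Some P) (\<lambda>l. MA (QA j) l * (\<Prod>t<j. 1 - MA (QA t) l))" for j
  proof -
    have "weight j l \<le> (\<Prod>t<j. 1 - MA (QA t) l)" for l
      unfolding weight_def
      by (rule prod_mono) (use MA_bounds MB_bounds in \<open>auto intro: mult_left_le\<close>)
    then have "expect (Some P) (\<lambda>l. MA (QA j) l * weight j l) \<le>
        expect (Some P) (\<lambda>l. MA (QA j) l * (\<Prod>t<j. 1 - MA (QA t) l))"
      using MA_bounds is_protocol_weak_protocol[OF protocol]
      by (intro expect_mono mult_left_mono) auto
    then show ?thesis
      using expect_QA[of j "MA (QA j)"] by (simp add: a_def mult.commute)
  qed
  then show ?thesis
    unfolding CA_def by (simp add: expect_sum sum_mono)
qed

lemma expect_CB_ge: "(\<Sum>j\<le>z. scale j * (1 - a j) * b j) \<le> expect (Some P) (CB (Some P) z)"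
proof -
  have "scale j * (1 - a j) * b j \<le> expect (Some P) (\<lambda>l. MB (QB j) l * (\<Prod>t<j. 1 - MB (QB t) l))" for j
  proof -
    have "weight j l * (1 - MA (QA j) l) \<le> (\<Prod>t<j. 1 - MB (QB t) l)" for l
    proof -
      have "weight j l \<le> (\<Prod>t<j. 1 - MB (QB t) l)"
        unfolding weight_def
        by (rule prod_mono) (use MA_bounds MB_bounds in \<open>auto intro: mult_left_le_one_le\<close>)
      moreover have "0 \<le> weight j l"
        unfolding weight_def using MA_bounds MB_bounds by (intro prod_nonneg) simp
      ultimately show ?thesis
        using MA_bounds[of j l] by (smt (verit) mult_left_le)
    qed
    then have "expect (Some P) (\<lambda>l. MB (QB j) l * (weight j l * (1 - MA (QA j) l))) \<le>
        expect (Some P) (\<lambda>l. MB (QB j) l * (\<Prod>t<j. 1 - MB (QB t) l))"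
      using MB_bounds is_protocol_weak_protocol[OF protocol]
      by (intro expect_mono mult_left_mono) auto
    then show ?thesis
      using expect_QB[of j "MB (QB j)"] by (simp add: b_def mult_ac)
  qed
  then show ?thesis
    unfolding CB_def by (simp add: expect_sum sum_mono)
qed

text \<open>Every round strictly shrinks the support: a positive dominated measure equals 1 on some
  reachable leaf, which conditioning then removes. If \<open>a j = 0\<close>, the first conditioning changes
  nothing, and then \<open>b j > 0\<close> because the two dominated measures cannot both vanish.\<close>

lemma support_size_QA_Suc_less:
  assumes QA: "QA j \<noteq> None" and a: "a j \<noteq> 1" and b: "b j \<noteq> 1"
  shows "QA (Suc j) \<noteq> None \<and> support_size (QA (Suc j)) < support_size (QA j)"
proof -
  obtain R where R: "QA j = Some R" and weak: "weak_protocol R"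
    using QA weak_QA[of j] by auto
  obtain R1 where R1: "cond (Some R) (MA (Some R)) = Some R1"
    using a R by (auto simp: cond_def a_def)
  then have QB: "QB j = Some R1"
    using R by (simp add: PiB_eq)
  have weak1: "weak_protocol R1"
    using weak_QB[of j] QB by simp
  have QA_Suc: "QA (Suc j) = cond (Some R1) (MB (Some R1))"
    using QB by (simp add: PiA_Suc)
  have "QA (Suc j) \<noteq> None"
    using QA_Suc b QB by (simp add: cond_def b_def)
  moreover have le1: "support_size (QA (Suc j)) \<le> card (support R1)"
    using support_size_cond_le[where M = "MB (Some R1)", OF weak1 dmeas_bounds[OF weak1]] QA_Suc
    by simp
  moreover have le2: "card (support R1) \<le> card (support R)"
    using support_size_cond_le[where M = "MA (Some R)", OF weak dmeas_bounds[OF weak]] R1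
    by (simp add: support_size_def)
  moreover have "support_size (QA (Suc j)) < card (support R)"
  proof (cases "0 < a j")
    case True
    then show ?thesis
      using support_size_cond_dmeas_less[OF weak, of True] R R1 le1
      by (simp add: a_def support_size_def)
  next
    case False
    then have null: "expect (Some R) (MA (Some R)) = 0"
      using a_bounds[of j] R by (simp add: a_def)
    then have "agree R R1"
      using cond_agree[where M = "MA (Some R)", OF weak dmeas_bounds[OF weak]] R1 by force
    moreover have "0 < expect (Some R) (MB (Some R))"
      using expect_dmeas_pos[OF weak, of True] null by simp
    ultimately have "0 < expect (Some R1) (MB (Some R1))"
      using agree_expect agree_dmeas by metis
    then show ?thesis
      using support_size_cond_dmeas_less[OF weak1] QA_Suc le2 by fastforce
  qed
  ultimately show ?thesis
    using R by (simp add: support_size_def)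
qed

lemma exists_mass_one: "\<exists>j. a j = 1 \<or> b j = 1"
proof (rule ccontr)
  assume "\<not> ?thesis"
  then have "QA j \<noteq> None \<and> support_size (QA j) + j \<le> support_size (QA 0)" for j
  proof (induction j)
    case (Suc j)
    then show ?case
      using support_size_QA_Suc_less[of j] by fastforce
  qed (simp add: PiA_0)
  then show False
    by (metis add_leE not_less_eq_eq)
qed

end

section \<open>Choosing the index\<close>

lemma one_minus_sum_le_prod_one_minus:
  fixes x :: "'a \<Rightarrow> real"
  assumes "finite T" and "\<And>t. t \<in> T \<Longrightarrow> 0 \<le> x t \<and> x t \<le> 1"
  shows "1 - sum x T \<le> (\<Prod>t\<in>T. 1 - x t)"
  using assms
proof (induction T rule: finite_induct)
  case (insert t T)
  have "0 \<le> (\<Prod>t\<in>T. 1 - x t)" "(\<Prod>t\<in>T. 1 - x t) \<le> 1"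
    using insert.prems by (auto intro: prod_nonneg prod_le_1)
  then have "x t * (\<Prod>t\<in>T. 1 - x t) \<le> x t"
    using insert.prems[of t] by (simp add: mult_left_le)
  then show ?case
    using insert by (simp add: algebra_simps)
qed simp

lemma one_minus_sums_le_prod:
  fixes a b :: "nat \<Rightarrow> real"
  assumes "\<And>j. 0 \<le> a j" "\<And>j. a j \<le> 1" "\<And>j. 0 \<le> b j" "\<And>j. b j \<le> 1"
  shows "1 - (\<Sum>t<j. a t) - (\<Sum>t<j. b t) \<le> (\<Prod>t<j. (1 - a t) * (1 - b t))"
proof -
  let ?x = "\<lambda>t. 1 - (1 - a t) * (1 - b t)"
  have "0 \<le> ?x t \<and> ?x t \<le> 1" "?x t \<le> a t + b t" for t
  proof -
    have "0 \<le> (1 - a t) * (1 - b t)" "(1 - a t) * (1 - b t) \<le> 1" "a t * b t \<le> a t"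
      using assms[of t] by (auto intro: mult_le_one mult_left_le)
    then show "0 \<le> ?x t \<and> ?x t \<le> 1" "?x t \<le> a t + b t"
      using assms[of t] by (auto simp: algebra_simps)
  qed
  then have "1 - (\<Sum>t<j. a t + b t) \<le> 1 - sum ?x {..<j}"
    using sum_mono[of "{..<j}" ?x "\<lambda>t. a t + b t"] by simp
  also have "\<dots> \<le> (\<Prod>t<j. 1 - ?x t)"
    using \<open>\<And>t. 0 \<le> ?x t \<and> ?x t \<le> 1\<close> by (intro one_minus_sum_le_prod_one_minus) auto
  finally show ?thesis
    by (simp add: sum.distrib)
qed

lemma first_reaching_index:
  fixes a b :: "nat \<Rightarrow> real"
  assumes "0 < c" and "\<exists>k. c \<le> (\<Sum>j\<le>k. a j) \<or> c \<le> (\<Sum>j\<le>k. b j)"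
  obtains k where "c \<le> (\<Sum>j\<le>k. a j) \<or> c \<le> (\<Sum>j\<le>k. b j)"
    and "(\<Sum>j<k. a j) < c" and "(\<Sum>j<k. b j) < c"
proof -
  let ?reach = "\<lambda>k. c \<le> (\<Sum>j\<le>k. a j) \<or> c \<le> (\<Sum>j\<le>k. b j)"
  define k where "k = (LEAST k. ?reach k)"
  have "(\<Sum>j<k. a j) < c \<and> (\<Sum>j<k. b j) < c"
  proof (cases k)
    case (Suc t)
    then show ?thesis
      using not_less_Least[of t ?reach] k_def by (auto simp: lessThan_Suc_atMost not_le)
  qed (simp add: assms(1))
  then show ?thesis
    using that LeastI_ex[OF assms(2)] k_def by blast
qed

lemma weighted_sum_ge:
  fixes w y :: "nat \<Rightarrow> real"
  assumes "\<And>j. j \<le> k \<Longrightarrow> d \<le> w j" and "\<And>j. 0 \<le> y j" and "0 \<le> d" and "c \<le> (\<Sum>j\<le>k. y j)"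
  shows "c * d \<le> (\<Sum>j\<le>k. w j * y j)"
proof -
  have "c * d \<le> (\<Sum>j\<le>k. y j) * d"
    using assms(4,3) by (rule mult_right_mono)
  also have "\<dots> \<le> (\<Sum>j\<le>k. w j * y j)"
    unfolding sum_distrib_right using assms(1,2) by (intro sum_mono) (simp add: mult.commute mult_right_mono)
  finally show ?thesis .
qed

text \<open>Stop at the first index \<open>k\<close> where the partial sums of \<open>a\<close> or of \<open>b\<close> reach \<open>c\<close>. Before
  \<open>k\<close> both partial sums are below \<open>c\<close>, so every scaling factor up to \<open>k\<close> is at least \<open>1 - 2 c\<close>.\<close>

lemma first_crossing:
  fixes a b :: "nat \<Rightarrow> real" and c :: real
  assumes a: "\<And>j. 0 \<le> a j" "\<And>j. a j \<le> 1" and b: "\<And>j. 0 \<le> b j" "\<And>j. b j \<le> 1"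
    and c: "0 < c" "c \<le> 1/2"
    and reach: "\<exists>k. c \<le> (\<Sum>j\<le>k. a j) \<or> c \<le> (\<Sum>j\<le>k. b j)"
  shows "\<exists>z. (c * (1 - 2*c) \<le> (\<Sum>j\<le>z. (\<Prod>t<j. (1 - a t) * (1 - b t)) * a j) \<and> (\<Sum>j<z. b j) < c)
    \<or> (c * (1 - 2*c) \<le> (\<Sum>j\<le>z. (\<Prod>t<j. (1 - a t) * (1 - b t)) * (1 - a j) * b j) \<and> (\<Sum>j\<le>z. a j) < c)"
proof -
  let ?s = "\<lambda>j. \<Prod>t<j. (1 - a t) * (1 - b t)"
  obtain k where cross: "c \<le> (\<Sum>j\<le>k. a j) \<or> c \<le> (\<Sum>j\<le>k. b j)"
    and before: "(\<Sum>j<k. a j) < c" "(\<Sum>j<k. b j) < c"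
    using first_reaching_index[OF c(1) reach] .
  have partial_le: "(\<Sum>t<j. f t) \<le> (\<Sum>t<k. f t)" if "j \<le> k" "\<And>t. 0 \<le> f t" for j and f :: "nat \<Rightarrow> real"
    using that by (intro sum_mono2) auto
  have s_ge: "1 - (\<Sum>t<j. a t) - (\<Sum>t<j. b t) \<le> ?s j" "?s j \<le> 1" for j
    using one_minus_sums_le_prod[OF a b] a b by (auto intro!: prod_le_1 mult_le_one)
  have c2: "0 \<le> 1 - 2 * c"
    using c by simp
  show ?thesis
  proof (cases "c \<le> (\<Sum>j\<le>k. a j)")
    case True
    have "1 - 2 * c \<le> ?s j" if "j \<le> k" for j
      using s_ge(1)[of j] partial_le[of j a, OF that a(1)] partial_le[of j b, OF that b(1)] before
      by linarith
    then show ?thesis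
      using weighted_sum_ge[where y = a, OF _ a(1) c2 True] before by (intro exI[of _ k]) auto
  next
    case False
    have "1 - 2 * c \<le> ?s j * (1 - a j)" if "j \<le> k" for j
    proof -
      have "?s j * a j \<le> a j"
        using mult_right_mono[OF s_ge(2)[of j] a(1)[of j]] by simp
      moreover have "(\<Sum>t<j. a t) + a j = (\<Sum>t\<le>j. a t)"
        by (simp flip: lessThan_Suc_atMost)
      moreover have "(\<Sum>t\<le>j. a t) \<le> (\<Sum>t\<le>k. a t)"
        using that a(1) by (intro sum_mono2) auto
      ultimately show ?thesis
        using s_ge(1)[of j] partial_le[of j b, OF that b(1)] before False by (simp add: algebra_simps)
    qed
    then have "c * (1 - 2 * c) \<le> (\<Sum>j\<le>k. ?s j * (1 - a j) * b j)"
      using False cross c2 by (intro weighted_sum_ge[where y = b]) (auto intro: b(1))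
    then show ?thesis
      using False by (intro exI[of _ k]) auto
  qed
qed

theorem lemma3p26:
  fixes P :: proto and c :: real
  assumes "is_protocol P"
    and "0 < c" and "c \<le> 1/2"
  shows "\<exists>z::nat.
     (expect (Some P) (CA (Some P) z) \<ge> c * (1 - 2*c) \<and>
        (\<Sum>j<z. 1 - BestA (PiB (Some P) j)) < c)
   \<or> (expect (Some P) (CB (Some P) z) \<ge> c * (1 - 2*c) \<and>
        (\<Sum>j\<le>z. 1 - BestB (PiA (Some P) j)) < c)"
proof -
  interpret protocol_sequence P
    using assms(1) by unfold_locales
  have "\<exists>k. c \<le> (\<Sum>j\<le>k. a j) \<or> c \<le> (\<Sum>j\<le>k. b j)"
  proof -
    obtain k where "a k = 1 \<or> b k = 1"
      using exists_mass_one by blast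
    moreover have "a k \<le> (\<Sum>j\<le>k. a j)" "b k \<le> (\<Sum>j\<le>k. b j)"
      using a_bounds b_bounds by (auto intro: member_le_sum)
    ultimately have "c \<le> (\<Sum>j\<le>k. a j) \<or> c \<le> (\<Sum>j\<le>k. b j)"
      using assms(3) by auto
    then show ?thesis ..
  qed
  then obtain z
    where "(c * (1 - 2*c) \<le> (\<Sum>j\<le>z. scale j * a j) \<and> (\<Sum>j<z. b j) < c)
      \<or> (c * (1 - 2*c) \<le> (\<Sum>j\<le>z. scale j * (1 - a j) * b j) \<and> (\<Sum>j\<le>z. a j) < c)"
    using first_crossing[of a b c, OF a_bounds b_bounds assms(2,3)] unfolding scale_def by blast
  moreover have "(\<Sum>j<z. 1 - BestA (QB j)) \<le> (\<Sum>j<z. b j)" "(\<Sum>j\<le>z. 1 - BestB (QA j)) \<le> (\<Sum>j\<le>z. a j)"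
    using beta_le_b alpha_le_a by (auto intro: sum_mono)
  ultimately show ?thesis
    using expect_CA_ge[of z] expect_CB_ge[of z] by (intro exI[of _ z]) linarith
qed

end
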